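(* For every prime $p\ge7$, $N_{=}(4p)\ge p^2+11p-1$.
   Context: Graphs are finite, undirected and simple; the order of a graph is its number of vertices. For a positive integer $k$, $N_{=}(k)$ denotes the smallest integer $n\ge1$ such that every graph on $n$ vertices contains an induced regular subgraph (all vertices of the subgraph having the same degree within it) of order exactly $k$. *)

theory Defs
  imports Main "HOL-Computational_Algebra.Primes"
begin

text \<open>A finite simple graph is given by a finite vertex set V and a symmetric,
irreflexive adjacency relation E (only its restriction to V matters).\<close>

definition simple_graph :: "'a set \<Rightarrow> ('a \<Rightarrow> 'a \<Rightarrow> bool) \<Rightarrow> bool" where
  "simple_graph V E \<longleftrightarrow> finite V \<and> (\<forall>x y. E x y \<longrightarrow> E y x) \<and> (\<forall>x. \<not> E x x)"

definition deg_in :: "('a \<Rightarrow> 'a \<Rightarrow> bool) \<Rightarrow> 'a set \<Rightarrow> 'a \<Rightarrow> nat" where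
  "deg_in E S v = card {u \<in> S. E v u}"

definition induced_regular :: "('a \<Rightarrow> 'a \<Rightarrow> bool) \<Rightarrow> 'a set \<Rightarrow> bool" where
  "induced_regular E S \<longleftrightarrow> (\<exists>d. \<forall>v\<in>S. deg_in E S v = d)"

definition has_induced_regular_of_order :: "'a set \<Rightarrow> ('a \<Rightarrow> 'a \<Rightarrow> bool) \<Rightarrow> nat \<Rightarrow> bool" where
  "has_induced_regular_of_order V E k \<longleftrightarrow>
     (\<exists>S. S \<subseteq> V \<and> card S = k \<and> induced_regular E S)"

text \<open>N_=(k): least n \<ge> 1 such that every graph on n vertices contains an induced
regular subgraph of order exactly k. Graphs on n vertices are taken (up to
isomorphism) on the vertex set {0..<n}.\<close>
definition N_eq :: "nat \<Rightarrow> nat" where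
  "N_eq k = (LEAST n. n \<ge> 1 \<and>
     (\<forall>E :: nat \<Rightarrow> nat \<Rightarrow> bool. simple_graph {0..<n} E \<longrightarrow>
        has_induced_regular_of_order {0..<n} E k))"

end

theory Submission
  imports Defs "HOL-Library.Ramsey"
begin

(* The bound is witnessed by a graph on p^2 + 11p - 2 vertices without induced regular
   subgraphs of order 4p. Its building block, a gadget, consists of two 6-cliques
   a_0..a_5 and b_0..b_5, with a_j b_k an edge iff j < k, plus universal vertices. A nonempty
   induced d-regular subgraph of a gadget is a clique, or d <= 2 and it has 2d + 2 vertices;
   a gadget on m >= 12 vertices has clique number m - 6. The graph is the disjoint union of
   gadgets with clique numbers 4p - 1, 2p - 1, 2p - 1 and p - 4 times p - 1, a triangle and
   2p isolated vertices. A d-regular induced subgraph of order 4p meets every component in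
   0, d + 1 or (for d <= 2) 2d + 2 vertices. For d <= 1 there is not enough room, for d = 2
   all these numbers are divisible by 3, and for d >= 3 the subgraph is a union of cliques
   of order d + 1 in distinct components, which the clique numbers and the primality of p
   rule out. *)

lemma sum_lessThan_split_at:
  fixes f :: "nat \<Rightarrow> 'a :: comm_monoid_add"
  assumes "m < n"
  shows "(\<Sum>i<n. f i) = (\<Sum>i<m. f i) + f m + (\<Sum>i = Suc m..<n. f i)"
proof -
  have "(\<Sum>i<n. f i) = (\<Sum>i<Suc m. f i) + (\<Sum>i = Suc m..<n. f i)"
    using assms by (metis Suc_leI atLeast0LessThan le0 sum.atLeastLessThan_concat)
  then show ?thesis
    by simp
qed

lemma deg_in_plus_non_neighbours:
  assumes "finite S" "v \<in> S" "\<not> E v v"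
  shows "deg_in E S v + card {u \<in> S. u \<noteq> v \<and> \<not> E v u} = card S - 1"
proof -
  have "S - {v} = {u \<in> S. E v u} \<union> {u \<in> S. u \<noteq> v \<and> \<not> E v u}"
    using assms(3) by auto
  then have "card (S - {v}) = card {u \<in> S. E v u} + card {u \<in> S. u \<noteq> v \<and> \<not> E v u}"
    using assms(1) by (simp add: card_Un_disjoint disjoint_iff)
  then show ?thesis
    using assms(2) unfolding deg_in_def by simp
qed

lemma deg_in_eq_card_minus_one_iff:
  assumes "finite S" "v \<in> S" "\<not> E v v"
  shows "deg_in E S v = card S - 1 \<longleftrightarrow> (\<forall>u\<in>S. u \<noteq> v \<longrightarrow> E v u)"
proof -
  have "card {u \<in> S. u \<noteq> v \<and> \<not> E v u} = 0 \<longleftrightarrow> (\<forall>u\<in>S. u \<noteq> v \<longrightarrow> E v u)"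
    using assms(1) by auto
  then show ?thesis
    using deg_in_plus_non_neighbours[of S v E, OF assms] by linarith
qed

lemma induced_regular_clique:
  assumes "finite S" "\<forall>v. \<not> E v v" "\<forall>v\<in>S. \<forall>u\<in>S. u \<noteq> v \<longrightarrow> E v u"
  shows "induced_regular E S"
proof -
  have "deg_in E S v = card S - 1" if "v \<in> S" for v
    using assms that deg_in_eq_card_minus_one_iff[of S v E] by blast
  then show ?thesis
    unfolding induced_regular_def by blast
qed

lemma induced_regular_independent:
  assumes "\<forall>v\<in>S. \<forall>u\<in>S. \<not> E v u"
  shows "induced_regular E S"
proof -
  have "{u \<in> S. E v u} = {}" if "v \<in> S" for v
    using assms that by blast
  then show ?thesis
    unfolding induced_regular_def deg_in_def by (metis card.empty)
qed

lemma deg_in_image: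
  assumes "inj_on h S" "v \<in> S"
  shows "deg_in E (h ` S) (h v) = deg_in (\<lambda>x y. E (h x) (h y)) S v"
proof -
  have "{u \<in> h ` S. E (h v) u} = h ` {y \<in> S. E (h v) (h y)}"
    by auto
  then show ?thesis
    unfolding deg_in_def using assms(1) by (simp add: card_image inj_on_subset)
qed

lemma induced_regular_image:
  assumes "inj_on h S"
  shows "induced_regular E (h ` S) \<longleftrightarrow> induced_regular (\<lambda>x y. E (h x) (h y)) S"
  using deg_in_image[OF assms] unfolding induced_regular_def by auto

lemma ramsey_induced_regular:
  "\<exists>n\<ge>1. \<forall>E :: nat \<Rightarrow> nat \<Rightarrow> bool. simple_graph {0..<n} E \<longrightarrow>
      has_induced_regular_of_order {0..<n} E k"
proof -
  obtain n where "n \<ge> 1" and n: "\<forall>(V::nat set) Es. finite V \<and> card V \<ge> n \<longrightarrow>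
      (\<exists>R \<subseteq> V. card R = k \<and> clique R Es \<or> card R = k \<and> indep R Es)"
    using ramsey2[of k k] by blast
  have "has_induced_regular_of_order {0..<n} E k" if "simple_graph {0..<n} E" for E
  proof -
    have sym: "\<forall>x y. E x y \<longrightarrow> E y x" and irrefl: "\<forall>x. \<not> E x x"
      using that unfolding simple_graph_def by auto
    define Es where "Es = {{x, y} | x y. E x y}"
    have edge_iff: "{v, u} \<in> Es \<longleftrightarrow> E v u" for v u
      using sym unfolding Es_def by (auto simp: doubleton_eq_iff)
    obtain R where R: "R \<subseteq> {0..<n}" "card R = k" "clique R Es \<or> indep R Es"
      using n[rule_format, of "{0..<n}" Es] by auto
    then have "finite R"
      using finite_subset by blast
    have "induced_regular E R"
      using R(3)
    proof
      assume "clique R Es"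
      then have "\<forall>v\<in>R. \<forall>u\<in>R. u \<noteq> v \<longrightarrow> E v u"
        unfolding clique_def edge_iff by auto
      with \<open>finite R\<close> irrefl show ?thesis
        by (rule induced_regular_clique)
    next
      assume "indep R Es"
      have "\<not> E v u" if "v \<in> R" "u \<in> R" for v u
        using \<open>indep R Es\<close> irrefl that unfolding indep_def edge_iff by (cases "v = u") auto
      then have "\<forall>v\<in>R. \<forall>u\<in>R. \<not> E v u"
        by blast
      then show ?thesis
        by (rule induced_regular_independent)
    qed
    then show ?thesis
      using R(1,2) unfolding has_induced_regular_of_order_def by blast
  qed
  then show ?thesis
    using \<open>n \<ge> 1\<close> by blast
qed

lemma N_eq_gt_card:
  assumes G: "simple_graph V E" and no_reg: "\<not> has_induced_regular_of_order V E k"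
  shows "card V < N_eq k"
proof (rule ccontr)
  assume "\<not> card V < N_eq k"
  define n where "n = N_eq k"
  have "n \<ge> 1 \<and> (\<forall>E :: nat \<Rightarrow> nat \<Rightarrow> bool. simple_graph {0..<n} E \<longrightarrow>
      has_induced_regular_of_order {0..<n} E k)"
    (* Ramsey's theorem guarantees that the LEAST in the definition of N_eq is attained. *)
    unfolding n_def N_eq_def using ramsey_induced_regular[of k] by (rule LeastI_ex)
  moreover obtain h where h: "bij_betw h {0..<card V} V"
    using G ex_bij_betw_nat_finite unfolding simple_graph_def by blast
  moreover have "simple_graph {0..<n} (\<lambda>x y. E (h x) (h y))"
    using G unfolding simple_graph_def by simp
  ultimately obtain S where S: "S \<subseteq> {0..<n}" "card S = k" "induced_regular (\<lambda>x y. E (h x) (h y)) S"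
    unfolding has_induced_regular_of_order_def by blast
  have "S \<subseteq> {0..<card V}"
    using S(1) \<open>\<not> card V < N_eq k\<close> unfolding n_def by auto
  then have "inj_on h S" "h ` S \<subseteq> V"
    using h by (auto simp: bij_betw_def inj_on_subset)
  then show False
    using no_reg S(2,3) induced_regular_image[of h S E] card_image[of h S]
    unfolding has_induced_regular_of_order_def by auto
qed

(* Vertices j < t and t <= j < 2t form two cliques, j < t and t <= k < 2t are adjacent
   iff j < k - t, and the vertices from 2t on are universal. *)
definition gadget_adj :: "nat \<Rightarrow> nat \<Rightarrow> nat \<Rightarrow> bool" where
  "gadget_adj t j k \<longleftrightarrow> j \<noteq> k \<and>
     (2 * t \<le> j \<or> 2 * t \<le> k \<or> (j < t \<longleftrightarrow> k < t) \<or> (j < t \<and> j + t < k) \<or> (k < t \<and> k + t < j))"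

lemma half_graph_regular:
  fixes A B :: "nat set"
  assumes A: "A \<subseteq> {..<t}" "A \<noteq> {}" and B: "B \<subseteq> {t..<2 * t}" and "r > 0"
    and deg_A: "\<forall>a\<in>A. card {b \<in> B. b \<le> a + t} = r"
    and deg_B: "\<forall>b\<in>B. card {a \<in> A. b \<le> a + t} = r"
  shows "card A = r \<and> card B = r \<and> 2 * r \<le> t + 1"
proof -
  have fin: "finite A" "finite B"
    using A(1) B finite_subset by auto
  define a0 where "a0 = Min A"
  define a1 where "a1 = Max A"
  have a0: "a0 \<in> A" "\<forall>a\<in>A. a0 \<le> a" and a1: "a1 \<in> A" "\<forall>a\<in>A. a \<le> a1"
    using fin A(2) unfolding a0_def a1_def by auto
  have same: "{b \<in> B. b \<le> a0 + t} = {b \<in> B. b \<le> a1 + t}"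
  proof (rule card_subset_eq)
    show "finite {b \<in> B. b \<le> a1 + t}"
      using fin by simp
    have "a0 \<le> a1"
      using a0(1) a1(2) by blast
    then show "{b \<in> B. b \<le> a0 + t} \<subseteq> {b \<in> B. b \<le> a1 + t}"
      by auto
    show "card {b \<in> B. b \<le> a0 + t} = card {b \<in> B. b \<le> a1 + t}"
      using deg_A a0 a1 by simp
  qed
  have B_le: "b \<le> a0 + t" if "b \<in> B" for b
  proof (rule ccontr)
    assume "\<not> b \<le> a0 + t"
    then have "b \<notin> {b \<in> B. b \<le> a1 + t}"
      unfolding same[symmetric] by simp
    then have "a1 + t < b"
      using that by simp
    then have "{a \<in> A. b \<le> a + t} = {}"
      using a1 by fastforce
    then have "r = 0"
      using deg_B that by (metis card.empty)
    then show False
      using \<open>r > 0\<close> by simp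
  qed
  then have "{b \<in> B. b \<le> a0 + t} = B"
    by blast
  then have card_B: "card B = r"
    using deg_A a0(1) by force
  then have "B \<noteq> {}"
    using \<open>r > 0\<close> by auto
  then obtain b where b: "b \<in> B"
    by blast
  have "{a \<in> A. b \<le> a + t} = A"
    using B_le[OF b] a0(2) by auto
  then have card_A: "card A = r"
    using deg_B b by force
  have "B \<subseteq> {t..a0 + t}"
    using B B_le by auto
  then have "card B \<le> a0 + 1"
    using card_mono[of "{t..a0 + t}" B] by simp
  moreover have "A \<subseteq> {a0..<t}"
    using A(1) a0(2) by auto
  then have "card A \<le> t - a0"
    using card_mono[of "{a0..<t}" A] by simp
  moreover have "a0 < t"
    using A(1) a0(1) by auto
  ultimately show ?thesis
    using card_A card_B by linarith
qed

lemma gadget_non_neighbours_regular: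
  assumes fin: "finite T" and "T \<noteq> {}" and "r > 0"
    and non_nb: "\<forall>j\<in>T. card {k \<in> T. k \<noteq> j \<and> \<not> gadget_adj t j k} = r"
  shows "card T = 2 * r \<and> 2 * r \<le> t + 1"
proof -
  have T_lt: "j < 2 * t" if "j \<in> T" for j
  proof (rule ccontr)
    assume "\<not> j < 2 * t"
    then have "{k \<in> T. k \<noteq> j \<and> \<not> gadget_adj t j k} = {}"
      unfolding gadget_adj_def by auto
    then show False
      using non_nb that \<open>r > 0\<close> by (metis card.empty less_irrefl)
  qed
  define A where "A = {j \<in> T. j < t}"
  define B where "B = {j \<in> T. t \<le> j}"
  have non_nb_A: "{k \<in> T. k \<noteq> a \<and> \<not> gadget_adj t a k} = {b \<in> B. b \<le> a + t}" if "a \<in> A" for a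
    using that T_lt unfolding A_def B_def gadget_adj_def by auto
  have non_nb_B: "{k \<in> T. k \<noteq> b \<and> \<not> gadget_adj t b k} = {a \<in> A. b \<le> a + t}" if "b \<in> B" for b
    using that T_lt unfolding A_def B_def gadget_adj_def by auto
  have "A \<noteq> {}"
  proof
    assume "A = {}"
    obtain j where j: "j \<in> T"
      using \<open>T \<noteq> {}\<close> by blast
    then have "j \<in> B"
      using \<open>A = {}\<close> unfolding A_def B_def by auto
    then have "{k \<in> T. k \<noteq> j \<and> \<not> gadget_adj t j k} = {}"
      using non_nb_B \<open>A = {}\<close> by simp
    then show False
      using non_nb j \<open>r > 0\<close> by (metis card.empty less_irrefl)
  qed
  moreover have "A \<subseteq> {..<t}" "B \<subseteq> {t..<2 * t}"
    using T_lt unfolding A_def B_def by auto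
  moreover have "\<forall>a\<in>A. card {b \<in> B. b \<le> a + t} = r"
    using non_nb non_nb_A unfolding A_def by force
  moreover have "\<forall>b\<in>B. card {a \<in> A. b \<le> a + t} = r"
    using non_nb non_nb_B unfolding B_def by force
  ultimately have "card A = r \<and> card B = r \<and> 2 * r \<le> t + 1"
    using half_graph_regular[of A t B r] \<open>r > 0\<close> by blast
  moreover have "T = A \<union> B" "A \<inter> B = {}"
    unfolding A_def B_def by auto
  then have "card T = card A + card B"
    using fin by (simp add: card_Un_disjoint)
  ultimately show ?thesis
    by simp
qed

lemma gadget_regular_card:
  assumes fin: "finite T" and "T \<noteq> {}" and reg: "\<forall>j\<in>T. deg_in (gadget_adj t) T j = d"
  shows "card T = d + 1 \<or> (2 * d + 1 \<le> t \<and> card T = 2 * d + 2)"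
proof -
  define r where "r = card T - 1 - d"
  have non_nb: "card {k \<in> T. k \<noteq> j \<and> \<not> gadget_adj t j k} = r" "d + r + 1 = card T" if "j \<in> T" for j
    using deg_in_plus_non_neighbours[of T j "gadget_adj t"] fin that reg card_gt_0_iff[of T]
    unfolding r_def gadget_adj_def by auto
  obtain j where "j \<in> T"
    using \<open>T \<noteq> {}\<close> by blast
  show ?thesis
  proof (cases "r = 0")
    case True
    then show ?thesis
      using non_nb(2)[OF \<open>j \<in> T\<close>] by simp
  next
    case False
    then have "card T = 2 * r \<and> 2 * r \<le> t + 1"
      using gadget_non_neighbours_regular[OF fin \<open>T \<noteq> {}\<close>] non_nb(1) by blast
    then show ?thesis
      using non_nb(2)[OF \<open>j \<in> T\<close>] by auto
  qed
qed

lemma gadget_regular_card_below: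
  assumes "T \<subseteq> {..<t}" "T \<noteq> {}" and reg: "\<forall>j\<in>T. deg_in (gadget_adj t) T j = d"
  shows "card T = d + 1"
proof -
  have fin: "finite T"
    using assms(1) finite_subset by blast
  obtain j where j: "j \<in> T"
    using assms(2) by blast
  have "deg_in (gadget_adj t) T j = card T - 1"
    using deg_in_eq_card_minus_one_iff[of T j "gadget_adj t"] fin j assms(1)
    unfolding gadget_adj_def by auto
  then show ?thesis
    using reg j fin card_gt_0_iff[of T] by auto
qed

lemma gadget_clique_card:
  assumes T: "T \<subseteq> {..<n}" and "2 * t \<le> n" and clique: "\<forall>j\<in>T. \<forall>k\<in>T. k \<noteq> j \<longrightarrow> gadget_adj t j k"
  shows "card T \<le> n - t"
proof -
  define T1 where "T1 = {j \<in> T. j < 2 * t}"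
  define T2 where "T2 = {j \<in> T. 2 * t \<le> j}"
  define column where "column j = (if j < t then j else j - t)" for j
  have "inj_on column T1"
  proof (rule inj_onI)
    fix j k
    assume jk: "j \<in> T1" "k \<in> T1" "column j = column k"
    show "j = k"
    proof (rule ccontr)
      assume "j \<noteq> k"
      then have "gadget_adj t j k"
        using clique jk(1,2) unfolding T1_def by auto
      then show False
        using jk \<open>j \<noteq> k\<close> unfolding column_def T1_def gadget_adj_def by (auto split: if_splits)
    qed
  qed
  moreover have "column ` T1 \<subseteq> {..<t}"
    unfolding column_def T1_def by auto
  ultimately have "card T1 \<le> t"
    by (metis card_image card_lessThan card_mono finite_lessThan)
  moreover have "T2 \<subseteq> {2 * t..<n}"
    using T unfolding T2_def by auto
  then have "card T2 \<le> n - 2 * t"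
    using card_mono[of "{2 * t..<n}" T2] by simp
  moreover have "T = T1 \<union> T2" "T1 \<inter> T2 = {}"
    unfolding T1_def T2_def by auto
  then have "card T = card T1 + card T2"
    using T finite_subset[OF T] by (simp add: card_Un_disjoint)
  ultimately show ?thesis
    using \<open>2 * t \<le> n\<close> by linarith
qed

definition sigma_adj :: "('b \<Rightarrow> 'b \<Rightarrow> bool) \<Rightarrow> 'a \<times> 'b \<Rightarrow> 'a \<times> 'b \<Rightarrow> bool" where
  "sigma_adj E u v \<longleftrightarrow> fst u = fst v \<and> E (snd u) (snd v)"

lemma deg_in_sigma_adj: "deg_in (sigma_adj E) S (i, j) = deg_in E {k. (i, k) \<in> S} j"
proof -
  have "{u \<in> S. sigma_adj E (i, j) u} = Pair i ` {k \<in> {k. (i, k) \<in> S}. E j k}"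
    unfolding sigma_adj_def by force
  then show ?thesis
    unfolding deg_in_def by (simp add: card_image inj_on_def)
qed

definition comp_size :: "nat \<Rightarrow> nat \<Rightarrow> nat" where
  "comp_size p i =
     (if i = 0 then 4 * p + 5 else if i \<le> 2 then 2 * p + 5 else if i < p - 1 then p + 5
      else if i = p - 1 then 3 else 1)"

definition host_vertices :: "nat \<Rightarrow> (nat \<times> nat) set" where
  "host_vertices p = (SIGMA i:{..<3 * p}. {..<comp_size p i})"

abbreviation host_adj :: "nat \<times> nat \<Rightarrow> nat \<times> nat \<Rightarrow> bool" where
  "host_adj \<equiv> sigma_adj (gadget_adj 6)"

lemma card_host_vertices:
  assumes "p \<ge> 7"
  shows "card (host_vertices p) = p\<^sup>2 + 11 * p - 2"
proof -
  obtain q where q: "p = q + 7"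
    using assms le_Suc_ex by (metis add.commute)
  have "card (host_vertices p) = (\<Sum>i<3 * p. comp_size p i)"
    unfolding host_vertices_def by simp
  also have "\<dots> = (\<Sum>i<p - 1. comp_size p i) + comp_size p (p - 1) + (\<Sum>i = p..<3 * p. comp_size p i)"
    using sum_lessThan_split_at[of "p - 1" "3 * p" "comp_size p"] assms by simp
  also have "(\<Sum>i<p - 1. comp_size p i) = (\<Sum>i<2. comp_size p i) + comp_size p 2 + (\<Sum>i = 3..<p - 1. comp_size p i)"
    using sum_lessThan_split_at[of 2 "p - 1" "comp_size p"] assms by (simp add: numeral_3_eq_3)
  also have "(\<Sum>i = 3..<p - 1. comp_size p i) = (\<Sum>i = 3..<p - 1. p + 5)"
    by (rule sum.cong) (auto simp: comp_size_def)
  also have "(\<Sum>i = p..<3 * p. comp_size p i) = (\<Sum>i = p..<3 * p. 1)"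
    using assms by (intro sum.cong) (auto simp: comp_size_def)
  also have "(\<Sum>i<2. comp_size p i) = comp_size p 0 + comp_size p 1"
    by (simp add: numeral_2_eq_2)
  finally have "card (host_vertices p) =
      comp_size p 0 + comp_size p 1 + comp_size p 2 + (p - 4) * (p + 5) + comp_size p (p - 1) + 2 * p"
    by simp
  moreover have "comp_size p 0 = 4 * p + 5" "comp_size p 1 = 2 * p + 5" "comp_size p 2 = 2 * p + 5"
    "comp_size p (p - 1) = 3"
    using assms by (auto simp: comp_size_def)
  ultimately show ?thesis
    unfolding q by (simp add: power2_eq_square algebra_simps)
qed

lemma host_slice_card:
  assumes "p \<ge> 7" and S: "S \<subseteq> host_vertices p" and reg: "\<forall>v\<in>S. deg_in host_adj S v = d"
    and "i < 3 * p"
  defines "T \<equiv> {j. (i, j) \<in> S}"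
  shows "card T = 0 \<or> card T = d + 1 \<or> (d \<le> 2 \<and> card T = 2 * d + 2)"
    and "p - 1 \<le> i \<Longrightarrow> card T \<le> 3 \<and> (card T = 0 \<or> card T = d + 1)"
    and "p \<le> i \<Longrightarrow> card T \<le> 1"
    and "i < p - 1 \<Longrightarrow> card T = d + 1 \<Longrightarrow> d + 7 \<le> comp_size p i"
proof -
  have T_sub: "T \<subseteq> {..<comp_size p i}"
    using S unfolding T_def host_vertices_def by auto
  then have fin: "finite T"
    using finite_subset by blast
  have T_reg: "\<forall>j\<in>T. deg_in (gadget_adj 6) T j = d"
    using reg deg_in_sigma_adj[of "gadget_adj 6" S i] unfolding T_def by auto
  show "card T = 0 \<or> card T = d + 1 \<or> (d \<le> 2 \<and> card T = 2 * d + 2)"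
    using gadget_regular_card[OF fin _ T_reg] by fastforce
  show "card T \<le> 3 \<and> (card T = 0 \<or> card T = d + 1)" if "p - 1 \<le> i"
  proof -
    have "comp_size p i \<le> 3"
      using that \<open>p \<ge> 7\<close> unfolding comp_size_def by auto
    then have "T \<subseteq> {..<6}" "card T \<le> 3"
      using T_sub card_mono[OF _ T_sub] by auto
    then show ?thesis
      using gadget_regular_card_below[OF _ _ T_reg] by fastforce
  qed
  show "card T \<le> 1" if "p \<le> i"
  proof -
    have "comp_size p i \<le> 1"
      using that \<open>p \<ge> 7\<close> unfolding comp_size_def by auto
    then show ?thesis
      using card_mono[OF _ T_sub] by simp
  qed
  show "d + 7 \<le> comp_size p i" if "i < p - 1" "card T = d + 1"
  proof -
    have clique: "\<forall>j\<in>T. \<forall>k\<in>T. k \<noteq> j \<longrightarrow> gadget_adj 6 j k"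
      using deg_in_eq_card_minus_one_iff[OF fin, of _ "gadget_adj 6"] T_reg that(2)
      unfolding gadget_adj_def by auto
    have "comp_size p i = (comp_size p i - 6) + 6" "12 \<le> comp_size p i"
      using that(1) \<open>p \<ge> 7\<close> unfolding comp_size_def by auto
    then show ?thesis
      using gadget_clique_card[OF T_sub _ clique] that(2) by linarith
  qed
qed

lemma three_not_dvd_4_mult_prime:
  assumes "prime (p :: nat)" "p \<noteq> 3"
  shows "\<not> 3 dvd 4 * p"
proof
  assume "3 dvd 4 * p"
  then have "3 dvd p"
    by presburger
  moreover have "\<forall>m. m dvd p \<longrightarrow> m = 1 \<or> m = p"
    using assms(1) by (simp add: prime_nat_iff)
  ultimately have "(3 :: nat) = 1 \<or> 3 = p"
    by blast
  then show False
    using assms(2) by simp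
qed

lemma prime_dvd_mult_imp_le:
  fixes p a b :: nat
  assumes "prime p" "p dvd a * b" "a > 0" "b > 0"
  shows "p \<le> a \<or> p \<le> b"
  using assms prime_dvd_mult_nat dvd_imp_le by metis

lemma slice_sum_lt_small_degree:
  fixes c :: "nat \<Rightarrow> nat"
  assumes "p \<ge> 7" "d \<le> 1"
    and sizes: "\<And>i. i < 3 * p \<Longrightarrow> c i = 0 \<or> c i = d + 1 \<or> (d \<le> 2 \<and> c i = 2 * d + 2)"
    and tail: "\<And>i. i < 3 * p \<Longrightarrow> p - 1 \<le> i \<Longrightarrow> c i \<le> 3 \<and> (c i = 0 \<or> c i = d + 1)"
    and single: "\<And>i. i < 3 * p \<Longrightarrow> p \<le> i \<Longrightarrow> c i \<le> 1"
  shows "(\<Sum>i<3 * p. c i) < 4 * p"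
proof -
  have "(\<Sum>i<3 * p. c i) = (\<Sum>i<p - 1. c i) + c (p - 1) + (\<Sum>i = p..<3 * p. c i)"
    using sum_lessThan_split_at[of "p - 1" "3 * p" c] assms(1) by simp
  also have "\<dots> \<le> (\<Sum>i<p - 1. 2 * d + 2) + (d + 1) + (\<Sum>i = p..<3 * p. 1 - d)"
  proof (intro add_mono sum_mono)
    show "c i \<le> 2 * d + 2" if "i \<in> {..<p - 1}" for i
    proof -
      have "i < 3 * p"
        using that by simp
      then show ?thesis
        using sizes[of i] by linarith
    qed
    have "p - 1 < 3 * p"
      using assms(1) by simp
    then show "c (p - 1) \<le> d + 1"
      using tail[of "p - 1"] by auto
    show "c i \<le> 1 - d" if "i \<in> {p..<3 * p}" for i
    proof -
      have "i < 3 * p" "p \<le> i"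
        using that by simp_all
      then have "c i \<le> 1" "c i = 0 \<or> c i = d + 1"
        using tail[of i] single[of i] by simp_all
      then show ?thesis
        using assms(2) by linarith
    qed
  qed
  also have "\<dots> = (p - 1) * (2 * d + 2) + (d + 1) + 2 * p * (1 - d)"
    by simp
  also have "\<dots> < 4 * p"
  proof -
    have "d = 0 \<or> d = 1"
      using assms(2) by linarith
    then show ?thesis
      using assms(1) by (elim disjE) (simp_all add: diff_mult_distrib)
  qed
  finally show ?thesis .
qed

lemma clique_components_mult_ne_4p:
  assumes "prime p" "p \<ge> 7" and J: "J \<subseteq> {i. i < p - 1 \<and> d + 7 \<le> comp_size p i}"
  shows "card J * (d + 1) \<noteq> 4 * p"
proof
  assume eq: "card J * (d + 1) = 4 * p"
  have "J \<subseteq> {..<p - 1}"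
    using J by auto
  then have J_le: "card J \<le> p - 1"
    using card_mono[of "{..<p - 1}" J] by simp
  have "d + 1 < 4 * p"
    using J eq assms(2) unfolding comp_size_def by (cases "J = {}") (auto split: if_splits)
  moreover have "card J \<noteq> 0"
    using eq assms(2) by (intro notI) simp
  ultimately have "card J \<noteq> 1"
    using eq by (intro notI) simp
  with \<open>card J \<noteq> 0\<close> have "card J \<ge> 2"
    by linarith
  show False
  proof (cases "d + 1 < p")
    case True
    have "p dvd card J * (d + 1)"
      using eq by simp
    then have "p \<le> card J \<or> p \<le> d + 1"
      using prime_dvd_mult_imp_le[OF assms(1)] \<open>card J \<ge> 2\<close> by simp
    then show False
      using J_le True assms(2) by arith
  next
    case False
    have "J \<subseteq> {..<3}"
      using J False unfolding comp_size_def by (auto split: if_splits)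
    then have "card J \<le> 3"
      using card_mono[of "{..<3}" J] by simp
    moreover have "card J \<noteq> 3"
    proof
      assume "card J = 3"
      then have "3 dvd 4 * p"
        using eq by (metis dvd_triv_left)
      then show False
        using three_not_dvd_4_mult_prime[OF assms(1)] assms(2) by simp
    qed
    moreover have "J \<subseteq> {0}" if "card J = 2"
      using J eq that unfolding comp_size_def by (auto split: if_splits)
    ultimately show False
      using \<open>card J \<ge> 2\<close> card_mono[of "{0}" J] by force
  qed
qed

lemma clique_slices_sum_ne_4p:
  fixes c :: "nat \<Rightarrow> nat"
  assumes "prime p" "p \<ge> 7" "d \<ge> 3"
    and sizes: "\<And>i. i < 3 * p \<Longrightarrow> c i = 0 \<or> c i = d + 1 \<or> (d \<le> 2 \<and> c i = 2 * d + 2)"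
    and tail: "\<And>i. i < 3 * p \<Longrightarrow> p - 1 \<le> i \<Longrightarrow> c i \<le> 3 \<and> (c i = 0 \<or> c i = d + 1)"
    and clique: "\<And>i. i < 3 * p \<Longrightarrow> i < p - 1 \<Longrightarrow> c i = d + 1 \<Longrightarrow> d + 7 \<le> comp_size p i"
  shows "(\<Sum>i<3 * p. c i) \<noteq> 4 * p"
proof -
  define J where "J = {i \<in> {..<3 * p}. c i \<noteq> 0}"
  have J_lt: "i < 3 * p" if "i \<in> J" for i
    using that unfolding J_def by simp
  have c_J: "c i = d + 1" if "i \<in> J" for i
  proof -
    have "c i \<noteq> 0"
      using that unfolding J_def by simp
    then show ?thesis
      using sizes[OF J_lt[OF that]] assms(3) by linarith
  qed
  have "(\<Sum>i<3 * p. c i) = (\<Sum>i\<in>J. c i)"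
    unfolding J_def by (rule sum.mono_neutral_right) auto
  also have "\<dots> = card J * (d + 1)"
    using c_J by simp
  finally have "(\<Sum>i<3 * p. c i) = card J * (d + 1)" .
  moreover have "J \<subseteq> {i. i < p - 1 \<and> d + 7 \<le> comp_size p i}"
  proof
    fix i
    assume "i \<in> J"
    then have "i < p - 1"
      using tail[OF J_lt[OF \<open>i \<in> J\<close>]] c_J[OF \<open>i \<in> J\<close>] assms(3) by linarith
    then show "i \<in> {i. i < p - 1 \<and> d + 7 \<le> comp_size p i}"
      using clique[OF J_lt[OF \<open>i \<in> J\<close>]] c_J[OF \<open>i \<in> J\<close>] by simp
  qed
  ultimately show ?thesis
    using clique_components_mult_ne_4p \<open>prime p\<close> \<open>p \<ge> 7\<close> by simp
qed

lemma host_no_induced_regular_4p: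
  assumes "prime p" "p \<ge> 7" and S: "S \<subseteq> host_vertices p" "card S = 4 * p"
  shows "\<not> induced_regular host_adj S"
proof
  assume "induced_regular host_adj S"
  then obtain d where reg: "\<forall>v\<in>S. deg_in host_adj S v = d"
    unfolding induced_regular_def by blast
  define c where "c i = card {j. (i, j) \<in> S}" for i
  note slice = host_slice_card[OF \<open>p \<ge> 7\<close> S(1) reg, folded c_def]
  have "S = (SIGMA i:{..<3 * p}. {j. (i, j) \<in> S})"
    using S(1) unfolding host_vertices_def by auto
  moreover have "finite {j. (i, j) \<in> S}" for i
    using S(1) finite_subset[of "{j. (i, j) \<in> S}" "{..<comp_size p i}"]
    unfolding host_vertices_def by auto
  ultimately have sum_c: "(\<Sum>i<3 * p. c i) = 4 * p"
    using S(2) unfolding c_def by (metis card_SigmaI finite_lessThan)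
  consider "d \<le> 1" | "d = 2" | "d \<ge> 3"
    by linarith
  then show False
  proof cases
    case 1
    then show False
      using slice_sum_lt_small_degree[of p d c, OF \<open>p \<ge> 7\<close> 1 slice(1-3)] sum_c by simp
  next
    case 2
    have "3 dvd c i" if "i \<in> {..<3 * p}" for i
    proof -
      have "c i = 0 \<or> c i = 3 \<or> c i = 6"
        using slice(1)[of i] that 2 by simp
      then show ?thesis
        by auto
    qed
    then have "3 dvd 4 * p"
      using sum_c dvd_sum[of "{..<3 * p}" 3 c] by simp
    then show False
      using three_not_dvd_4_mult_prime \<open>prime p\<close> \<open>p \<ge> 7\<close> by simp
  next
    case 3
    then show False
      using clique_slices_sum_ne_4p[of p d c, OF \<open>prime p\<close> \<open>p \<ge> 7\<close> 3 slice(1,2,4)] sum_c by simp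
  qed
qed

theorem theorem9:
  fixes p :: nat
  assumes "prime p" and "p \<ge> 7"
  shows "N_eq (4 * p) \<ge> p ^ 2 + 11 * p - 1"
proof -
  have "simple_graph (host_vertices p) host_adj"
    unfolding simple_graph_def host_vertices_def sigma_adj_def gadget_adj_def by auto
  moreover have "\<not> has_induced_regular_of_order (host_vertices p) host_adj (4 * p)"
    using host_no_induced_regular_4p[OF assms] unfolding has_induced_regular_of_order_def by blast
  ultimately have "card (host_vertices p) < N_eq (4 * p)"
    by (rule N_eq_gt_card)
  then show ?thesis
    using card_host_vertices[OF \<open>p \<ge> 7\<close>] by simp
qed

end
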